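(* Let $n\geq 2$ and $M>2n$ be integers, $\Omega>0$, and let $\omega_q=-\Omega+(q-1)h$, $q=1,\dots,M$, with $h=\frac{2\Omega}{M-1}$. Let $\mu=\sum_{j=1}^n a_j\delta_{y_j}$ with $a_j\in\mathbb C\setminus\{0\}$ and pairwise distinct $y_j\in I(n,\Omega):=\big[-\frac{(n-1)\pi}{2\Omega},\frac{(n-1)\pi}{2\Omega}\big]$, and let $m_{\min}=\min_j|a_j|$. Let $\mathbf Y=[\mu]+\mathbf W$ with $\|\mathbf W\|_\infty<\sigma$. Assume $$\min_{p\neq j}|y_p-y_j|\geq \frac{4.4\pi e}{\Omega}\Big(\frac{\sigma}{m_{\min}}\Big)^{\frac{1}{2n-2}}.$$ Then there is no $\sigma$-admissible measure of $\mathbf Y$ with fewer than $n$ supports, i.e. there is no $k<n$, no $\hat a_1,\dots,\hat a_k\in\mathbb C$ and no $\hat y_1,\dots,\hat y_k\in\mathbb R$ such that $\hat\mu=\sum_{j=1}^k\hat a_j\delta_{\hat y_j}$ satisfies $\|[\hat\mu]-\mathbf Y\|_\infty<\sigma$.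
   Context: For a discrete measure $\nu=\sum_j b_j\delta_{x_j}$ on $\mathbb R$, $\mathcal F\nu(\omega)=\sum_j b_je^{ix_j\omega}$ and $[\nu]=(\mathcal F\nu(\omega_1),\dots,\mathcal F\nu(\omega_M))^T\in\mathbb C^M$. A discrete measure $\hat\mu$ is called a $\sigma$-admissible measure of $\mathbf Y$ if $\|[\hat\mu]-\mathbf Y\|_\infty<\sigma$. *)

theory Defs
  imports "HOL-Analysis.Analysis"
begin

text \<open>A discrete measure with k atoms is represented by amplitudes a 0..a (k-1) and
  supports y 0..y (k-1). Its Fourier transform at omega.\<close>
definition fourier_meas :: "nat \<Rightarrow> (nat \<Rightarrow> complex) \<Rightarrow> (nat \<Rightarrow> real) \<Rightarrow> real \<Rightarrow> complex" where
  "fourier_meas k a y w = (\<Sum>j<k. a j * exp (\<i> * complex_of_real (y j * w)))"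

definition sample_freq :: "real \<Rightarrow> nat \<Rightarrow> nat \<Rightarrow> real" where
  "sample_freq \<Omega> M q = - \<Omega> + (real q - 1) * (2 * \<Omega> / (real M - 1))"

definition sup_normM :: "nat \<Rightarrow> (nat \<Rightarrow> complex) \<Rightarrow> real" where
  "sup_normM M v = Max ((\<lambda>q. cmod (v q)) ` {1..M})"

definition meas_vec :: "real \<Rightarrow> nat \<Rightarrow> nat \<Rightarrow> (nat \<Rightarrow> complex) \<Rightarrow> (nat \<Rightarrow> real) \<Rightarrow> nat \<Rightarrow> complex" where
  "meas_vec \<Omega> M k a y q = fourier_meas k a y (sample_freq \<Omega> M q)"

definition admissible :: "real \<Rightarrow> nat \<Rightarrow> real \<Rightarrow> (nat \<Rightarrow> complex) \<Rightarrow> nat \<Rightarrow> (nat \<Rightarrow> complex) \<Rightarrow> (nat \<Rightarrow> real) \<Rightarrow> bool" where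
  "admissible \<Omega> M \<sigma> Y k a y \<longleftrightarrow> sup_normM M (\<lambda>q. meas_vec \<Omega> M k a y q - Y q) < \<sigma>"

end

theory Submission
  imports Defs "HOL-Computational_Algebra.Polynomial"
begin

text \<open>If a measure with fewer than \<open>n = N + 1\<close> atoms were \<open>\<sigma>\<close>-admissible, its Fourier transform
  would differ from that of \<open>\<mu>\<close> by less than \<open>2\<sigma>\<close> at every sample, in particular on a uniform subgrid
  \<open>\<omega>_1 + t H\<close>, \<open>t = 0, \<dots>, 2N\<close>, with \<open>\<Omega>/(2N) \<le> H \<le> \<Omega>/N\<close>. On this subgrid the difference is an
  exponential sum in the nodes \<open>\<zeta>_j = exp (i y_j H)\<close> and \<open>N\<close> competing nodes (padding with zero
  amplitudes). The difference operator whose roots are the competing nodes and the \<open>\<zeta>_p\<close>, \<open>p \<noteq> j\<close>,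
  isolates the \<open>j\<close>-th term: \<open>|a_j| |Q(\<zeta>_j)| |W_j| < 2^(2N) 2\<sigma>\<close>, where \<open>Q\<close> is the monic polynomial
  vanishing at the competing nodes and \<open>W_j = \<Prod>_(p \<noteq> j) (\<zeta>_j - \<zeta>_p)\<close>. Since \<open>H |y_j - y_p| \<le> \<pi>\<close>,
  Jordan's inequality turns the separation \<open>D\<close> into \<open>|W_j| \<ge> (2HD/\<pi>)^N j! (N - j)!\<close> for the nodes
  in increasing order. Lagrange interpolation of \<open>Q\<close> gives \<open>\<Sum>_j Q(\<zeta>_j) / W_j = 1\<close>, whence
  \<open>m_min (\<Omega>D/(2N\<pi>))^(2N) (N!)^2 < 2^(2N) 2\<sigma>\<close>; the stated threshold for \<open>D\<close> contradicts this
  via \<open>N! \<ge> e (N/e)^N\<close>.\<close>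

lemma jordan_inequality:
  fixes t :: real
  assumes "0 \<le> t" "t \<le> pi/2"
  shows "2*t/pi \<le> sin t"
proof (cases "t \<le> pi/2 - 1")
  case True
  then have "t \<le> 1"
    using pi_less_4 by linarith
  then have "t * t^2 \<le> t * 1"
    using assms by (intro mult_left_mono) (auto simp: power_le_one)
  then have "t^3/6 \<le> t/3"
    using assms by (simp add: eval_nat_numeral)
  moreover have "\<bar>sin t - (\<Sum>m<3. sin_coeff m * t ^ m)\<bar> \<le> inverse (fact 3) * \<bar>t\<bar> ^ 3"
    by (rule Maclaurin_sin_bound)
  moreover have "(\<Sum>m<3. sin_coeff m * t ^ m) = t"
    by (simp add: eval_nat_numeral sin_coeff_def)
  ultimately have "t - t/3 \<le> sin t"
    using assms by (simp add: eval_nat_numeral abs_if split: if_splits)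
  moreover have "2*t/pi \<le> 2*t/3"
    using pi_gt3 assms by (intro divide_left_mono) auto
  ultimately show ?thesis by linarith
next
  case False
  define u where "u = pi/2 - t"
  have u: "0 \<le> u" "u \<le> 1"
    using False assms by (auto simp: u_def)
  have "sin t = cos u"
    by (simp add: u_def cos_diff)
  moreover have "cos u = 1 - 2 * sin (u/2) ^ 2"
    using cos_double_sin[of "u/2"] by simp
  moreover have "sin (u/2) ^ 2 \<le> (u/2)^2"
    using abs_sin_x_le_abs_x[of "u/2"] u by (metis abs_le_square_iff)
  ultimately have "1 - u^2/2 \<le> sin t"
    by (simp add: power_divide)
  moreover have "u^2/2 \<le> u/2"
    using u by (simp add: power2_eq_square mult_left_le)
  moreover have "u/2 \<le> 2*u/pi"
    using mult_right_mono[of pi 4 u] u pi_less_4 by (simp add: field_simps mult.commute)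
  moreover have "2*t/pi = 1 - 2*u/pi"
    by (simp add: u_def field_simps)
  ultimately show ?thesis
    by linarith
qed

lemma norm_exp_i_diff_ge:
  fixes \<alpha> \<beta> :: real
  assumes "\<bar>\<alpha> - \<beta>\<bar> \<le> pi"
  shows "2 * \<bar>\<alpha> - \<beta>\<bar> / pi \<le> cmod (exp (\<i> * \<alpha>) - exp (\<i> * \<beta>))"
proof -
  define \<delta> where "\<delta> = \<alpha> - \<beta>"
  have \<delta>: "\<bar>\<delta>\<bar> \<le> pi"
    using assms by (simp add: \<delta>_def)
  have "(cmod (cis \<delta> - 1))^2 = (cos \<delta> - 1)^2 + (sin \<delta>)^2"
    by (simp add: cmod_power2)
  also have "\<dots> = 2 - 2 * cos \<delta>"
    by (simp add: power2_eq_square algebra_simps sin_squared_eq)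
  also have "\<dots> = (2 * sin (\<delta>/2))^2"
    using cos_double_sin[of "\<delta>/2"] by (simp add: power_mult_distrib)
  finally have "sqrt ((2 * sin (\<delta>/2))^2) = cmod (cis \<delta> - 1)"
    by (intro real_sqrt_unique) auto
  then have "cmod (cis \<delta> - 1) = 2 * \<bar>sin (\<delta>/2)\<bar>"
    unfolding real_sqrt_abs by (simp add: abs_mult)
  moreover have "exp (\<i> * \<alpha>) - exp (\<i> * \<beta>) = exp (\<i> * \<beta>) * (cis \<delta> - 1)"
    by (simp add: \<delta>_def cis_conv_exp algebra_simps flip: exp_add)
  ultimately have "cmod (exp (\<i> * \<alpha>) - exp (\<i> * \<beta>)) = 2 * \<bar>sin (\<delta>/2)\<bar>"
    by (simp add: norm_mult abs_mult)
  moreover have "\<bar>sin (\<delta>/2)\<bar> = sin (\<bar>\<delta>\<bar>/2)"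
    using sin_ge_zero[of "\<delta>/2"] sin_ge_zero[of "-\<delta>/2"] \<delta>
    by (cases "\<delta> \<ge> 0") auto
  moreover have "2 * (\<bar>\<delta>\<bar>/2) / pi \<le> sin (\<bar>\<delta>\<bar>/2)"
    using \<delta> by (intro jordan_inequality) auto
  ultimately show ?thesis by (simp add: \<delta>_def)
qed

lemma exp_mult_power_le_fact:
  assumes "N \<ge> 1"
  shows "exp 1 * (real N / exp 1)^N \<le> fact N"
  using assms
proof (induction N rule: dec_induct)
  case base
  then show ?case by simp
next
  case (step N)
  have N: "real N \<ge> 1"
    using step by simp
  have "(1 + 1/real N)^N \<le> (exp (1/real N))^N"
    by (intro power_mono) (auto simp: add.commute exp_ge_add_one_self)
  also have "\<dots> = exp 1"
    using N by (simp flip: exp_of_nat_mult)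
  finally have e: "(1 + 1/real N)^N \<le> exp 1" .
  have "exp 1 * (real (Suc N) / exp 1)^(Suc N)
      = (real (Suc N)/exp 1) * (exp 1 * (real N / exp 1)^N) * (1 + 1/real N)^N"
    using N by (simp add: power_divide field_simps)
  also have "\<dots> \<le> (real (Suc N)/exp 1) * fact N * exp 1"
    by (intro mult_mono step.IH e) auto
  also have "\<dots> = fact (Suc N)"
    by simp
  finally show ?case .
qed

lemma sum_inverse_fact_mult_square_le:
  "(\<Sum>j\<le>N. 1 / (fact j * fact (N - j))^2) \<le> (4::real)^N / (fact N)^2"
proof -
  have "1 / (fact j * fact (N - j))^2 = real (N choose j)^2 / (fact N)^2" if "j \<le> N" for j
    using binomial_fact[OF that, where 'a=real] by (simp add: field_simps flip: power_mult_distrib)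
  then have "(\<Sum>j\<le>N. 1 / (fact j * fact (N - j))^2) = real (\<Sum>j\<le>N. (N choose j)^2) / (fact N)^2"
    by (simp add: sum_divide_distrib)
  also have "(\<Sum>j\<le>N. (N choose j)^2) = (2*N) choose N"
    by (rule choose_square_sum)
  also have "real ((2*N) choose N) \<le> 4^N"
    using binomial_le_pow2[of "2*N" N] by (simp add: power_mult flip: of_nat_le_iff)
  finally show ?thesis
    by (simp add: divide_right_mono)
qed

lemma prod_abs_diff_eq_fact_mult_fact:
  assumes "j \<le> N"
  shows "(\<Prod>p\<in>{..N}-{j}. \<bar>real p - real j\<bar>) = fact j * fact (N - j)"
proof -
  have split: "{..N}-{j} = {..<j} \<union> {Suc j..N}"
    using assms by auto
  have "(\<Prod>p\<in>{..N}-{j}. \<bar>real p - real j\<bar>)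
      = (\<Prod>p<j. \<bar>real p - real j\<bar>) * (\<Prod>p\<in>{Suc j..N}. \<bar>real p - real j\<bar>)"
    unfolding split by (rule prod.union_disjoint) auto
  also have "\<dots> = (\<Prod>p<j. real (j - p)) * (\<Prod>p\<in>{Suc j..N}. real (p - j))"
    by (intro arg_cong2[where f = "(*)"] prod.cong) auto
  also have "(\<Prod>p<j. real (j - p)) = (\<Prod>p\<in>{1..j}. real p)"
    by (rule prod.reindex_bij_witness[of _ "\<lambda>p. j - p" "\<lambda>p. j - p"]) auto
  also have "(\<Prod>p\<in>{Suc j..N}. real (p - j)) = (\<Prod>p\<in>{1..N-j}. real p)"
    by (rule prod.reindex_bij_witness[of _ "\<lambda>p. p + j" "\<lambda>p. p - j"]) (use assms in auto)
  finally show ?thesis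
    by (simp add: fact_prod)
qed

text \<open>The sum is the leading coefficient of the Lagrange interpolant of the monic polynomial
  \<open>\<Prod>l<N. (X - c l)\<close> at the \<open>N + 1\<close> nodes \<open>z 0, \<dots>, z N\<close>, i.e.\ of that polynomial itself.\<close>
lemma lagrange_identity_monic:
  fixes z c :: "nat \<Rightarrow> complex"
  assumes inj: "inj_on z {..N}"
  shows "(\<Sum>j\<le>N. (\<Prod>l<N. z j - c l) / (\<Prod>p\<in>{..N}-{j}. z j - z p)) = 1"
proof -
  define Q where "Q = (\<Prod>l<N. [:- c l, 1:])"
  define B where "B j = (\<Prod>p\<in>{..N}-{j}. [:- z p, 1:])" for j
  define w where "w j = (\<Prod>p\<in>{..N}-{j}. z j - z p)" for j
  define L where "L = (\<Sum>j\<le>N. smult ((\<Prod>l<N. z j - c l) / w j) (B j))"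
  have poly_Q: "poly Q x = (\<Prod>l<N. x - c l)" for x
    by (simp add: Q_def poly_prod)
  have poly_B: "poly (B j) x = (\<Prod>p\<in>{..N}-{j}. x - z p)" for j x
    by (simp add: B_def poly_prod)
  have degree_B: "degree (B j) = N" if "j \<le> N" for j
    unfolding B_def using that by (subst degree_prod_eq_sum_degree) auto
  have coeff_B: "coeff (B j) N = 1" if "j \<le> N" for j
    using lead_coeff_prod[of "\<lambda>p. [:- z p, 1:]" "{..N}-{j}"] degree_B[OF that] by (simp add: B_def)
  have degree_Q: "degree Q = N"
    unfolding Q_def by (subst degree_prod_eq_sum_degree) auto
  have coeff_Q: "coeff Q N = 1"
    using lead_coeff_prod[of "\<lambda>l. [:- c l, 1:]" "{..<N}"] degree_Q by (simp add: Q_def)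
  have w_nonzero: "w j \<noteq> 0" if "j \<le> N" for j
    unfolding w_def using inj that by (auto simp: inj_on_def)
  have degree_L: "degree L \<le> N"
    unfolding L_def
    by (intro degree_sum_le) (auto intro: order.trans[OF degree_smult_le] simp: degree_B)
  have poly_L: "poly L (z i) = poly Q (z i)" if "i \<le> N" for i
  proof -
    have "poly L (z i) = (\<Sum>j\<le>N. ((\<Prod>l<N. z j - c l) / w j) * poly (B j) (z i))"
      by (simp add: L_def poly_sum)
    also have "\<dots> = ((\<Prod>l<N. z i - c l) / w i) * poly (B i) (z i)"
      using that by (subst sum.remove[of _ i]) (auto simp: poly_B intro!: sum.neutral prod_zero)
    also have "\<dots> = poly Q (z i)"
      using w_nonzero[OF that] by (simp add: poly_B poly_Q w_def)
    finally show ?thesis .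
  qed
  have "Q = L"
  proof (rule poly_eqI_degree[of "z ` {..N}"])
    have "card (z ` {..N}) = Suc N"
      using inj by (simp add: card_image)
    then show "degree Q < card (z ` {..N})" "degree L < card (z ` {..N})"
      using degree_Q degree_L by auto
  qed (use poly_L in auto)
  then have "coeff L N = 1"
    using coeff_Q by simp
  then show ?thesis
    by (simp add: L_def coeff_sum coeff_B w_def)
qed

text \<open>\<open>annihilator rs u\<close> is \<open>\<Prod>r\<leftarrow>rs. (S - r)\<close> applied to \<open>u\<close>, where \<open>S\<close> is the shift
  \<open>u t \<mapsto> u (Suc t)\<close>; it kills every exponential \<open>\<lambda>t. r ^ t\<close> with \<open>r \<in> set rs\<close>.\<close>
fun annihilator :: "complex list \<Rightarrow> (nat \<Rightarrow> complex) \<Rightarrow> nat \<Rightarrow> complex" where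
  "annihilator [] u t = u t"
| "annihilator (r # rs) u t = annihilator rs u (Suc t) - r * annihilator rs u t"

lemma annihilator_exp_sum:
  "annihilator rs (\<lambda>t. \<Sum>i\<in>A. \<beta> i * \<zeta> i ^ t) t = (\<Sum>i\<in>A. \<beta> i * (\<Prod>r\<leftarrow>rs. \<zeta> i - r) * \<zeta> i ^ t)"
  by (induction rs arbitrary: t) (simp_all add: sum_distrib_left algebra_simps flip: sum_subtractf)

lemma annihilator_diff:
  "annihilator rs (\<lambda>t. u t - v t) t = annihilator rs u t - annihilator rs v t"
  by (induction rs arbitrary: t) (auto simp: right_diff_distrib)

lemma norm_annihilator_less:
  assumes "\<forall>r\<in>set rs. cmod r \<le> 1" and "\<forall>s\<le>t + length rs. cmod (u s) < c"
  shows "cmod (annihilator rs u t) < 2 ^ length rs * c"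
  using assms
proof (induction rs arbitrary: t)
  case Nil
  then show ?case by simp
next
  case (Cons r rs)
  have "cmod (annihilator rs u (Suc t)) < 2 ^ length rs * c"
    using Cons by (intro Cons.IH) auto
  moreover have "cmod (annihilator rs u t) < 2 ^ length rs * c"
    using Cons by (intro Cons.IH) auto
  moreover have "cmod (r * annihilator rs u t) \<le> cmod (annihilator rs u t)"
    using Cons.prems(1) by (simp add: norm_mult mult_left_le_one_le)
  ultimately show ?case
    using norm_triangle_ineq4[of "annihilator rs u (Suc t)" "r * annihilator rs u t"] by simp
qed

lemma annihilated_coefficient_bound:
  fixes \<beta> \<zeta> :: "'a \<Rightarrow> complex" and \<gamma> \<xi> :: "'b \<Rightarrow> complex"
  assumes "finite A" "j \<in> A"
    and "\<forall>r\<in>set rs. cmod r \<le> 1"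
    and "\<zeta> ` (A - {j}) \<subseteq> set rs" "\<xi> ` B \<subseteq> set rs"
    and "\<forall>t\<le>length rs. cmod ((\<Sum>i\<in>A. \<beta> i * \<zeta> i ^ t) - (\<Sum>i\<in>B. \<gamma> i * \<xi> i ^ t)) < c"
  shows "cmod (\<beta> j * (\<Prod>r\<leftarrow>rs. \<zeta> j - r)) < 2 ^ length rs * c"
proof -
  define u where "u t = (\<Sum>i\<in>A. \<beta> i * \<zeta> i ^ t) - (\<Sum>i\<in>B. \<gamma> i * \<xi> i ^ t)" for t
  have "annihilator rs u 0
      = (\<Sum>i\<in>A. \<beta> i * (\<Prod>r\<leftarrow>rs. \<zeta> i - r)) - (\<Sum>i\<in>B. \<gamma> i * (\<Prod>r\<leftarrow>rs. \<xi> i - r))"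
    unfolding u_def annihilator_diff annihilator_exp_sum by simp
  also have "(\<Sum>i\<in>B. \<gamma> i * (\<Prod>r\<leftarrow>rs. \<xi> i - r)) = 0"
    using assms(5) by (intro sum.neutral) (auto simp: prod_list_zero_iff)
  also have "(\<Sum>i\<in>A. \<beta> i * (\<Prod>r\<leftarrow>rs. \<zeta> i - r)) = \<beta> j * (\<Prod>r\<leftarrow>rs. \<zeta> j - r)"
    using assms(1,2,4) by (subst sum.remove[of _ j]) (auto simp: prod_list_zero_iff intro!: sum.neutral)
  finally have "annihilator rs u 0 = \<beta> j * (\<Prod>r\<leftarrow>rs. \<zeta> j - r)"
    by simp
  moreover have "cmod (annihilator rs u 0) < 2 ^ length rs * c"
    using assms(3,6) by (intro norm_annihilator_less) (auto simp: u_def)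
  ultimately show ?thesis
    by simp
qed

lemma index_gap_le_abs_diff:
  fixes y :: "nat \<Rightarrow> real"
  assumes gap: "\<forall>i<N. y i + D \<le> y (Suc i)" and "j \<le> N" "p \<le> N"
  shows "\<bar>real p - real j\<bar> * D \<le> \<bar>y p - y j\<bar>"
proof -
  have increasing: "(real p - real j) * D \<le> y p - y j" if "j \<le> p" "p \<le> N" for j p
    using that
  proof (induction p rule: dec_induct)
    case (step p)
    then have "y p + D \<le> y (Suc p)"
      using gap by simp
    then show ?case
      using step by (simp add: algebra_simps)
  qed simp
  show ?thesis
  proof (cases "j \<le> p")
    case True
    then show ?thesis
      using increasing[of j p] assms(3) by simp
  next
    case False
    then show ?thesis
      using increasing[of p j] assms(2) by (simp add: abs_minus_commute[of "y p"] left_diff_distrib)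
  qed
qed

lemma norm_prod_exp_nodes_diff_ge:
  fixes y :: "nat \<Rightarrow> real"
  assumes gap: "\<forall>i<N. y i + D \<le> y (Suc i)" and "D \<ge> 0" "H \<ge> 0"
    and width: "\<forall>j\<le>N. \<forall>p\<le>N. \<bar>y j - y p\<bar> * H \<le> pi" and "j \<le> N"
  shows "(2*H*D/pi)^N * (fact j * fact (N - j))
           \<le> (\<Prod>p\<in>{..N}-{j}. cmod (exp (\<i> * (y j * H)) - exp (\<i> * (y p * H))))"
proof -
  have "(2*H*D/pi)^N * (fact j * fact (N - j)) = (\<Prod>p\<in>{..N}-{j}. 2*H*D/pi * \<bar>real p - real j\<bar>)"
    unfolding prod.distrib prod_constant prod_abs_diff_eq_fact_mult_fact[OF assms(5)]
    using assms(5) by simp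
  also have "\<dots> \<le> (\<Prod>p\<in>{..N}-{j}. 2 * \<bar>y j * H - y p * H\<bar> / pi)"
  proof (intro prod_mono conjI)
    fix p assume p: "p \<in> {..N}-{j}"
    have "\<bar>real p - real j\<bar> * D * H \<le> \<bar>y p - y j\<bar> * H"
      using index_gap_le_abs_diff[OF gap assms(5), of p] p assms(3) by (intro mult_right_mono) auto
    then have "2 * (\<bar>real p - real j\<bar> * D * H) / pi \<le> 2 * (\<bar>y p - y j\<bar> * H) / pi"
      by (intro divide_right_mono) auto
    then show "2*H*D/pi * \<bar>real p - real j\<bar> \<le> 2 * \<bar>y j * H - y p * H\<bar> / pi"
      using assms(3) by (simp add: abs_mult abs_minus_commute mult_ac flip: left_diff_distrib right_diff_distrib)
  qed (use assms in auto)
  also have "\<dots> \<le> (\<Prod>p\<in>{..N}-{j}. cmod (exp (\<i> * (y j * H)) - exp (\<i> * (y p * H))))"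
    using width assms(3,5) by (intro prod_mono conjI norm_exp_i_diff_ge) (auto simp: abs_mult left_diff_distrib[symmetric])
  finally show ?thesis .
qed

lemma lagrange_weights_bound:
  fixes Q W :: "'a \<Rightarrow> complex"
  assumes "finite J" and "(\<Sum>j\<in>J. Q j / W j) = 1"
    and "\<forall>j\<in>J. 0 < w j \<and> w j \<le> cmod (W j)" and "\<forall>j\<in>J. cmod (Q j) * cmod (W j) < C"
  shows "1 < C * (\<Sum>j\<in>J. 1 / (w j)^2)"
proof -
  have "J \<noteq> {}"
    using assms(2) by auto
  have "1 \<le> (\<Sum>j\<in>J. cmod (Q j / W j))"
    using norm_sum[of "\<lambda>j. Q j / W j" J] assms(2) by simp
  also have "\<dots> < (\<Sum>j\<in>J. C / (w j)^2)"
  proof (rule sum_strict_mono)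
    fix j assume j: "j \<in> J"
    then have w: "0 < w j" "w j \<le> cmod (W j)" and QW: "cmod (Q j) * cmod (W j) < C"
      using assms(3,4) by auto
    then have "0 < C"
      using mult_nonneg_nonneg[OF norm_ge_zero norm_ge_zero, of "Q j" "W j"] by linarith
    have "cmod (Q j / W j) = cmod (Q j) * cmod (W j) / (cmod (W j))^2"
      using w by (simp add: norm_divide power2_eq_square)
    also have "\<dots> < C / (cmod (W j))^2"
      using QW w by (intro divide_strict_right_mono) auto
    also have "\<dots> \<le> C / (w j)^2"
      using w \<open>0 < C\<close> by (intro divide_left_mono power_mono) (auto intro!: mult_pos_pos)
    finally show "cmod (Q j / W j) < C / (w j)^2" .
  qed (use assms(1) \<open>J \<noteq> {}\<close> in auto)
  finally show ?thesis
    by (simp add: sum_distrib_left)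
qed

lemma node_annihilation_bound:
  fixes \<beta> \<gamma> \<zeta> \<xi> :: "nat \<Rightarrow> complex"
  assumes "j \<le> N" and "\<forall>p\<le>N. cmod (\<zeta> p) \<le> 1" and "\<forall>l<N. cmod (\<xi> l) \<le> 1"
    and "\<forall>t\<le>2*N. cmod ((\<Sum>p\<le>N. \<beta> p * \<zeta> p ^ t) - (\<Sum>l<N. \<gamma> l * \<xi> l ^ t)) < c"
  shows "cmod (\<beta> j) * (cmod (\<Prod>l<N. \<zeta> j - \<xi> l) * cmod (\<Prod>p\<in>{..N}-{j}. \<zeta> j - \<zeta> p)) < 2^(2*N) * c"
proof -
  define rs where "rs = map \<xi> [0..<N] @ map \<zeta> (sorted_list_of_set ({..N}-{j}))"
  have "length rs = 2*N"
    using assms(1) by (simp add: rs_def)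
  moreover have "(\<Prod>r\<leftarrow>rs. \<zeta> j - r) = (\<Prod>l<N. \<zeta> j - \<xi> l) * (\<Prod>p\<in>{..N}-{j}. \<zeta> j - \<zeta> p)"
    by (simp add: rs_def comp_def atLeast0LessThan flip: prod.distinct_set_conv_list)
  moreover have "cmod (\<beta> j * (\<Prod>r\<leftarrow>rs. \<zeta> j - r)) < 2 ^ length rs * c"
    using assms by (intro annihilated_coefficient_bound[where B = "{..<N}"])
      (auto simp: rs_def mult_2 image_subset_iff)
  ultimately show ?thesis
    by (simp add: norm_mult)
qed

lemma sum_inverse_node_weight_square_le:
  fixes x :: real
  assumes "x > 0"
  shows "(\<Sum>j\<le>N. 1 / ((2*x)^N * (fact j * fact (N - j)))^2) \<le> 1 / (x^(2*N) * (fact N)^2)"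
proof -
  have "(\<Sum>j\<le>N. 1 / ((2*x)^N * (fact j * fact (N - j)))^2)
      = (\<Sum>j\<le>N. 1 / (fact j * fact (N - j))^2) / (2*x)^(2*N)"
    by (simp add: sum_divide_distrib power_mult_distrib power_mult mult.commute)
  also have "\<dots> \<le> 4^N / (fact N)^2 / (2*x)^(2*N)"
    using assms by (intro divide_right_mono sum_inverse_fact_mult_square_le) auto
  also have "(2*x)^(2*N) = (2^N)^2 * x^(2*N)"
    by (simp only: power_even_eq power_mult_distrib)
  also have "(2^N)^2 = (4::real)^N"
    by (simp add: power2_eq_square flip: power_mult_distrib)
  finally show ?thesis
    using assms by (simp add: mult.commute)
qed

lemma exp_sum_separation_bound:
  fixes y :: "nat \<Rightarrow> real" and \<beta> \<gamma> \<xi> :: "nat \<Rightarrow> complex"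
  assumes "H > 0" "D > 0" "m > 0"
    and gap: "\<forall>i<N. y i + D \<le> y (Suc i)"
    and width: "\<forall>j\<le>N. \<forall>p\<le>N. \<bar>y j - y p\<bar> * H \<le> pi"
    and amp: "\<forall>j\<le>N. m \<le> cmod (\<beta> j)" and unit: "\<forall>l<N. cmod (\<xi> l) \<le> 1"
    and samples: "\<forall>t\<le>2*N. cmod ((\<Sum>p\<le>N. \<beta> p * exp (\<i> * (y p * H)) ^ t) - (\<Sum>l<N. \<gamma> l * \<xi> l ^ t)) < c"
  shows "m * (H*D/pi)^(2*N) * (fact N)^2 < 2^(2*N) * c"
proof -
  define \<zeta> where "\<zeta> p = exp (\<i> * (y p * H))" for p
  define Q where "Q j = (\<Prod>l<N. \<zeta> j - \<xi> l)" for j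
  define W where "W j = (\<Prod>p\<in>{..N}-{j}. \<zeta> j - \<zeta> p)" for j
  define x where "x = H*D/pi"
  define w where "w j = (2*x)^N * (fact j * fact (N - j))" for j
  have x: "x > 0"
    using assms(1,2) by (simp add: x_def)
  have W_ge: "w j \<le> cmod (W j)" if "j \<le> N" for j
    using norm_prod_exp_nodes_diff_ge[OF gap _ _ width that] assms(1,2)
    by (simp add: w_def x_def W_def \<zeta>_def prod_norm mult.assoc)
  have w_pos: "w j > 0" for j
    using x by (simp add: w_def)
  have "inj_on \<zeta> {..N}"
  proof (rule inj_onI, rule ccontr)
    fix j p assume "j \<in> {..N}" "p \<in> {..N}" "\<zeta> j = \<zeta> p" "j \<noteq> p"
    then have "W j = 0"
      unfolding W_def by (intro prod_zero bexI[of _ p]) auto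
    then show False
      using W_ge[of j] w_pos[of j] \<open>j \<in> {..N}\<close> by simp
  qed
  then have lagrange: "(\<Sum>j\<le>N. Q j / W j) = 1"
    unfolding Q_def W_def by (rule lagrange_identity_monic)
  have QW_less: "cmod (Q j) * cmod (W j) < 2^(2*N) * c / m" if "j \<le> N" for j
  proof -
    have "cmod (\<beta> j) * (cmod (Q j) * cmod (W j)) < 2^(2*N) * c"
      unfolding Q_def W_def using that unit samples
      by (intro node_annihilation_bound) (auto simp: \<zeta>_def)
    moreover have "m * (cmod (Q j) * cmod (W j)) \<le> cmod (\<beta> j) * (cmod (Q j) * cmod (W j))"
      using amp that by (intro mult_right_mono) auto
    ultimately show ?thesis
      using assms(3) by (simp add: pos_less_divide_eq mult.commute)
  qed
  have sum_le: "(\<Sum>j\<le>N. 1 / (w j)^2) \<le> 1 / (x^(2*N) * (fact N)^2)"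
    unfolding w_def using x by (rule sum_inverse_node_weight_square_le)
  have "0 < c"
    using samples[rule_format, of 0] norm_ge_zero by (meson le0 le_less_trans)
  have "1 < 2^(2*N) * c / m * (\<Sum>j\<le>N. 1 / (w j)^2)"
    using lagrange W_ge w_pos QW_less by (intro lagrange_weights_bound) auto
  also have "\<dots> \<le> 2^(2*N) * c / (m * x^(2*N) * (fact N)^2)"
    using mult_left_mono[OF sum_le, of "2^(2*N) * c / m"] \<open>0 < c\<close> assms(3) by (simp add: mult.assoc)
  finally have "1 < 2^(2*N) * c / (m * x^(2*N) * (fact N)^2)" .
  moreover have "0 < m * x^(2*N) * (fact N)^2"
    using x assms(3) by simp
  ultimately show ?thesis
    by (simp add: x_def less_divide_eq)
qed

lemma sample_freq_uniform_subgrid: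
  assumes "N \<ge> 1" "2*N < M" "\<Omega> > 0"
  obtains H where "\<Omega> / (2 * real N) \<le> H" "H \<le> \<Omega>/N"
    "\<forall>t\<le>2*N. \<exists>q\<in>{1..M}. sample_freq \<Omega> M q = sample_freq \<Omega> M 1 + real t * H"
proof -
  define s where "s = (M - 1) div (2*N)"
  define H where "H = real s * (2*\<Omega>/(real M - 1))"
  have M1: "real M - 1 = real (M - 1)" "real (M - 1) > 0"
    using assms(1,2) by auto
  have "s \<ge> 1"
    using assms(1,2) div_greater_zero_iff[of "M - 1" "2*N"] unfolding s_def by linarith
  have "2*N * s \<le> M - 1"
    unfolding s_def by (metis mult.commute times_div_less_eq_dividend)
  define \<rho> where "\<rho> = real (2*N * s) / real (M - 1)"
  have H_mult: "H * (2*N) = 2*\<Omega> * \<rho>"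
    by (simp add: H_def \<rho>_def M1(1))
  have "\<rho> \<le> 1"
    using \<open>2*N * s \<le> M - 1\<close> M1(2) by (simp add: \<rho>_def del: of_nat_mult)
  then have "H * (2*N) \<le> 2*\<Omega>"
    using H_mult assms(3) by simp
  then have upper: "H \<le> \<Omega>/N"
    using assms(1) by (simp add: field_simps)
  have "M - 1 < 2*N*(s + 1)"
    using assms(1) dividend_less_times_div[of "2*N" "M - 1"] by (simp add: s_def algebra_simps)
  also have "\<dots> \<le> 2 * (2*N * s)"
    using \<open>s \<ge> 1\<close> by simp
  finally have \<rho>_gt: "1 < 2 * \<rho>"
    using M1(2) by (simp add: \<rho>_def field_simps del: of_nat_mult flip: of_nat_less_iff)
  have "\<Omega> < H * (2*N)"
    using H_mult mult_strict_left_mono[OF \<rho>_gt assms(3)] by (simp add: mult_ac)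
  then have lower: "\<Omega> / (2 * real N) \<le> H"
    using assms(1) by (simp add: field_simps)
  have "\<exists>q\<in>{1..M}. sample_freq \<Omega> M q = sample_freq \<Omega> M 1 + real t * H" if "t \<le> 2*N" for t
  proof
    have "t * s \<le> M - 1"
      using that \<open>2*N * s \<le> M - 1\<close> mult_le_mono1[of t "2*N" s] by linarith
    then show "1 + t * s \<in> {1..M}"
      using assms(2) by auto
    show "sample_freq \<Omega> M (1 + t * s) = sample_freq \<Omega> M 1 + real t * H"
      by (simp add: sample_freq_def H_def algebra_simps)
  qed
  with lower upper show thesis
    by (intro that) auto
qed

lemma fourier_meas_shift:
  "fourier_meas K b z (w + real t * H)
     = (\<Sum>p<K. (b p * exp (\<i> * (z p * w))) * exp (\<i> * (z p * H)) ^ t)"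
proof -
  have "\<i> * (z p * (w + real t * H)) = \<i> * (z p * w) + of_nat t * (\<i> * (z p * H))" for p
    by (simp add: algebra_simps)
  then have "exp (\<i> * (z p * (w + real t * H))) = exp (\<i> * (z p * w)) * exp (\<i> * (z p * H)) ^ t" for p
    by (simp add: exp_add exp_of_nat_mult)
  then show ?thesis
    by (simp add: fourier_meas_def mult.assoc)
qed

lemma support_width_mult_le_pi:
  fixes N :: nat and y :: "nat \<Rightarrow> real"
  assumes "N \<ge> 1" "\<Omega> > 0" "0 \<le> H" "H \<le> \<Omega>/N"
    and range: "\<forall>j\<le>N. \<bar>y j\<bar> \<le> N * pi / (2*\<Omega>)"
  shows "\<forall>j\<le>N. \<forall>p\<le>N. \<bar>y j - y p\<bar> * H \<le> pi"
proof (intro allI impI)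
  fix j p assume "j \<le> N" "p \<le> N"
  then have "\<bar>y j\<bar> + \<bar>y p\<bar> \<le> N * pi / (2*\<Omega>) + N * pi / (2*\<Omega>)"
    using range by (intro add_mono) auto
  then have "\<bar>y j - y p\<bar> \<le> N * pi / \<Omega>"
    using abs_triangle_ineq4[of "y j" "y p"] by (simp add: mult.commute)
  then have "\<bar>y j - y p\<bar> * H \<le> (N * pi / \<Omega>) * (\<Omega> / N)"
    using assms(3,4) by (intro mult_mono) auto
  then show "\<bar>y j - y p\<bar> * H \<le> pi"
    using assms(1,2) by simp
qed

lemma sampled_separation_bound:
  fixes a ah :: "nat \<Rightarrow> complex" and y yh :: "nat \<Rightarrow> real"
  assumes "N \<ge> 1" "2*N < M" "\<Omega> > 0" "D > 0" "m > 0"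
    and gap: "\<forall>i<N. y i + D \<le> y (Suc i)"
    and range: "\<forall>j\<le>N. \<bar>y j\<bar> \<le> N * pi / (2*\<Omega>)"
    and amp: "\<forall>j\<le>N. m \<le> cmod (a j)"
    and samples: "\<forall>q\<in>{1..M}. cmod (meas_vec \<Omega> M (Suc N) a y q - meas_vec \<Omega> M N ah yh q) < c"
  shows "m * (\<Omega>*D/(2 * real N * pi))^(2*N) * (fact N)^2 < 2^(2*N) * c"
proof -
  obtain H where H: "\<Omega> / (2 * real N) \<le> H" "H \<le> \<Omega>/N"
    and grid: "\<forall>t\<le>2*N. \<exists>q\<in>{1..M}. sample_freq \<Omega> M q = sample_freq \<Omega> M 1 + real t * H"
    by (rule sample_freq_uniform_subgrid[OF assms(1-3)])
  define \<omega> where "\<omega> = sample_freq \<Omega> M 1"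
  have "0 < \<Omega> / (2 * real N)"
    using assms(1,3) by simp
  with H(1) have "H > 0"
    by linarith
  have samples': "\<forall>t\<le>2*N. cmod ((\<Sum>p\<le>N. a p * exp (\<i> * (y p * \<omega>)) * exp (\<i> * (y p * H)) ^ t)
      - (\<Sum>l<N. ah l * exp (\<i> * (yh l * \<omega>)) * exp (\<i> * (yh l * H)) ^ t)) < c"
    (is "\<forall>t\<le>2*N. ?sample_diff t")
  proof (intro allI impI)
    fix t assume "t \<le> 2*N"
    then obtain q where q: "q \<in> {1..M}" "sample_freq \<Omega> M q = \<omega> + real t * H"
      using grid \<omega>_def by blast
    then have "cmod (meas_vec \<Omega> M (Suc N) a y q - meas_vec \<Omega> M N ah yh q) < c"
      using samples by blast
    then show "?sample_diff t"
      by (simp only: meas_vec_def q(2) fourier_meas_shift lessThan_Suc_atMost)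
  qed
  have amp': "\<forall>j\<le>N. m \<le> cmod (a j * exp (\<i> * (y j * \<omega>)))"
    using amp by (simp add: norm_mult)
  have "m * (H*D/pi)^(2*N) * (fact N)^2 < 2^(2*N) * c"
    using support_width_mult_le_pi[OF assms(1,3) _ H(2) range] \<open>H > 0\<close>
    by (intro exp_sum_separation_bound[OF \<open>H > 0\<close> assms(4,5) gap _ amp' _ samples']) auto
  moreover have "\<Omega>*D/(2 * real N * pi) \<le> H*D/pi"
    using divide_right_mono[OF mult_right_mono[OF H(1), of D] pi_ge_zero] assms(4) by (simp add: mult.commute)
  then have "m * (\<Omega>*D/(2 * real N * pi))^(2*N) * (fact N)^2 \<le> m * (H*D/pi)^(2*N) * (fact N)^2"
    using assms(1,3,4,5) by (intro mult_right_mono mult_left_mono power_mono) auto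
  ultimately show ?thesis
    by linarith
qed

lemma sorting_permutation:
  fixes y :: "nat \<Rightarrow> 'a::linorder"
  assumes "inj_on y {..<n}"
  obtains \<pi> where "bij_betw \<pi> {..<n} {..<n}" "strict_mono_on {..<n} (y \<circ> \<pi>)"
proof -
  define xs where "xs = sorted_list_of_set (y ` {..<n})"
  have len: "length xs = n"
    using assms by (simp add: xs_def card_image)
  have xs: "distinct xs" "set xs = y ` {..<n}" "sorted_wrt (<) xs"
    by (simp_all add: xs_def)
  then have "bij_betw ((!) xs) {..<n} (y ` {..<n})"
    using len by (intro bij_betw_nth) auto
  then have bij: "bij_betw (the_inv_into {..<n} y \<circ> (!) xs) {..<n} {..<n}"
    by (rule bij_betw_trans[OF _ bij_betw_the_inv_into[OF inj_on_imp_bij_betw[OF assms]]])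
  have "y (the_inv_into {..<n} y (xs ! i)) = xs ! i" if "i < n" for i
    using that len xs(2) by (intro f_the_inv_into_f[OF assms]) (metis nth_mem)
  then have "strict_mono_on {..<n} (y \<circ> (the_inv_into {..<n} y \<circ> (!) xs))"
    using len sorted_wrt_nth_less[OF xs(3)] by (auto intro!: strict_mono_onI)
  with bij show thesis
    by (rule that)
qed

lemma fourier_meas_permute:
  assumes "bij_betw \<pi> {..<n} {..<n}"
  shows "fourier_meas n (a \<circ> \<pi>) (y \<circ> \<pi>) w = fourier_meas n a y w"
  unfolding fourier_meas_def using sum.reindex_bij_betw[OF assms] by simp

lemma fourier_meas_zero_extend:
  assumes "k \<le> N"
  shows "fourier_meas N (\<lambda>l. if l < k then a l else 0) y w = fourier_meas k a y w"
  unfolding fourier_meas_def using assms by (intro sum.mono_neutral_cong_right) auto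

lemma separation_bound:
  fixes a ah :: "nat \<Rightarrow> complex" and y yh :: "nat \<Rightarrow> real"
  assumes "N \<ge> 1" "2*N < M" "\<Omega> > 0" "D > 0" "m > 0" "k \<le> N"
    and sep: "\<forall>p<Suc N. \<forall>j<Suc N. p \<noteq> j \<longrightarrow> D \<le> \<bar>y p - y j\<bar>"
    and range: "\<forall>j<Suc N. \<bar>y j\<bar> \<le> N * pi / (2*\<Omega>)"
    and amp: "\<forall>j<Suc N. m \<le> cmod (a j)"
    and samples: "\<forall>q\<in>{1..M}. cmod (meas_vec \<Omega> M (Suc N) a y q - meas_vec \<Omega> M k ah yh q) < c"
  shows "m * (\<Omega>*D/(2 * real N * pi))^(2*N) * (fact N)^2 < 2^(2*N) * c"
proof -
  have "inj_on y {..<Suc N}"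
    using sep assms(4) by (force simp: inj_on_def)
  then obtain \<pi> where \<pi>: "bij_betw \<pi> {..<Suc N} {..<Suc N}" and sorted: "strict_mono_on {..<Suc N} (y \<circ> \<pi>)"
    by (rule sorting_permutation)
  have \<pi>_less: "\<pi> i < Suc N" if "i < Suc N" for i
    using \<pi> that by (auto simp: bij_betw_def)
  show ?thesis
  proof (rule sampled_separation_bound[OF assms(1-5), where a = "a \<circ> \<pi>" and y = "y \<circ> \<pi>"
        and ah = "\<lambda>l. if l < k then ah l else 0" and yh = yh])
    show "\<forall>i<N. (y \<circ> \<pi>) i + D \<le> (y \<circ> \<pi>) (Suc i)"
    proof (intro allI impI)
      fix i assume "i < N"
      then have "(y \<circ> \<pi>) i < (y \<circ> \<pi>) (Suc i)"
        using sorted by (simp add: strict_mono_on_def)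
      moreover have "\<pi> (Suc i) \<noteq> \<pi> i"
        using inj_onD[OF bij_betw_imp_inj_on[OF \<pi>], of "Suc i" i] \<open>i < N\<close> by auto
      then have "D \<le> \<bar>y (\<pi> (Suc i)) - y (\<pi> i)\<bar>"
        using sep \<pi>_less \<open>i < N\<close> by simp
      ultimately show "(y \<circ> \<pi>) i + D \<le> (y \<circ> \<pi>) (Suc i)"
        by simp
    qed
    show "\<forall>q\<in>{1..M}. cmod (meas_vec \<Omega> M (Suc N) (a \<circ> \<pi>) (y \<circ> \<pi>) q
        - meas_vec \<Omega> M N (\<lambda>l. if l < k then ah l else 0) yh q) < c"
      using samples assms(6) by (simp add: meas_vec_def fourier_meas_permute[OF \<pi>] fourier_meas_zero_extend)
  qed (use range amp \<pi>_less in auto)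
qed

lemma norm_le_sup_normM:
  assumes "q \<in> {1..M}"
  shows "cmod (v q) \<le> sup_normM M v"
  unfolding sup_normM_def using assms by (intro Max_ge) auto

lemma admissible_sample_diff_less:
  assumes "\<forall>q. Y q = meas_vec \<Omega> M n a y q + W q" "sup_normM M W < \<sigma>"
    and "admissible \<Omega> M \<sigma> Y k ah yh"
  shows "\<forall>q\<in>{1..M}. cmod (meas_vec \<Omega> M n a y q - meas_vec \<Omega> M k ah yh q) < 2*\<sigma>"
proof
  fix q assume q: "q \<in> {1..M}"
  have "meas_vec \<Omega> M n a y q - meas_vec \<Omega> M k ah yh q = - (meas_vec \<Omega> M k ah yh q - Y q) - W q"
    using assms(1) by simp
  also have "cmod \<dots> \<le> cmod (meas_vec \<Omega> M k ah yh q - Y q) + cmod (W q)"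
    by (metis norm_minus_cancel norm_triangle_ineq4)
  also have "\<dots> < \<sigma> + \<sigma>"
    using norm_le_sup_normM[OF q, of W] norm_le_sup_normM[OF q, of "\<lambda>q. meas_vec \<Omega> M k ah yh q - Y q"]
      assms(2,3) unfolding admissible_def by (intro add_strict_mono) auto
  finally show "cmod (meas_vec \<Omega> M n a y q - meas_vec \<Omega> M k ah yh q) < 2*\<sigma>"
    by simp
qed

lemma separation_threshold_bound:
  fixes N :: nat and \<Omega> \<sigma> m :: real
  assumes "N \<ge> 1" "\<Omega> > 0" "\<sigma> > 0" "m > 0"
  defines "D \<equiv> 4.4 * pi * exp 1 / \<Omega> * (\<sigma> / m) powr (1 / (2 * real N))"
  shows "2^(2*N) * (2*\<sigma>) \<le> m * (\<Omega>*D/(2 * real N * pi))^(2*N) * (fact N)^2"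
proof -
  define r where "r = (\<sigma> / m) powr (1 / (2 * real N))"
  have r: "r > 0" "r^(2*N) = \<sigma> / m"
    using assms(1,3,4) by (simp_all add: r_def powr_powr flip: powr_realpow)
  have "(2::real)^(2*N) \<le> 4.84^N"
    by (simp add: power_mult power_mono)
  moreover have "(2::real) \<le> exp 1"
    using exp_ge_add_one_self[of 1] by simp
  then have "(2::real) \<le> exp 1^2"
    using mult_mono[of 1 "exp 1" 2 "exp 1 :: real"] by (simp add: power2_eq_square)
  ultimately have "2^(2*N) * (2*\<sigma>) \<le> 4.84^N * exp 1^2 * \<sigma>"
    using assms(3) by (simp add: mult_mono)
  also have "\<dots> = m * (2.2 * r)^(2*N) * exp 1^2"
  proof -
    have "(2.2 * r)^(2*N) = 4.84^N * (\<sigma> / m)"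
      by (simp only: power_mult_distrib r(2)) (simp add: power_mult power2_eq_square)
    then show ?thesis
      using assms(4) by simp
  qed
  also have "\<dots> = m * ((2.2 * exp 1 * r / N) * (N / exp 1))^(2*N) * exp 1^2"
    using assms(1) by simp
  also have "\<dots> = m * (2.2 * exp 1 * r / N)^(2*N) * (exp 1 * (N / exp 1)^N)^2"
    by (simp only: power_mult_distrib power_even_eq) (simp only: ac_simps)
  also have "\<dots> \<le> m * (2.2 * exp 1 * r / N)^(2*N) * (fact N)^2"
    using exp_mult_power_le_fact[OF assms(1)] assms(4) by (intro mult_left_mono power_mono) auto
  also have "2.2 * exp 1 * r / N = \<Omega>*D/(2 * real N * pi)"
    using assms(2) by (simp add: D_def r_def)
  finally show ?thesis .
qed

theorem theorem2p1:
  fixes n M :: nat and \<Omega> \<sigma> :: real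
    and a :: "nat \<Rightarrow> complex" and y :: "nat \<Rightarrow> real"
    and W Y :: "nat \<Rightarrow> complex"
  assumes "n \<ge> 2" and "M > 2 * n" and "\<Omega> > 0"
    and "\<forall>j<n. a j \<noteq> 0"
    and "\<forall>p<n. \<forall>j<n. p \<noteq> j \<longrightarrow> y p \<noteq> y j"
    and "\<forall>j<n. y j \<in> {- ((real n - 1) * pi / (2 * \<Omega>)) .. (real n - 1) * pi / (2 * \<Omega>)}"
    and "\<forall>q. Y q = meas_vec \<Omega> M n a y q + W q"
    and "sup_normM M W < \<sigma>"
    and "\<forall>p<n. \<forall>j<n. p \<noteq> j \<longrightarrow>
           \<bar>y p - y j\<bar> \<ge> 4.4 * pi * exp 1 / \<Omega>
              * (\<sigma> / (MIN j\<in>{..<n}. cmod (a j))) powr (1 / (2 * real n - 2))"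
  shows "\<not> (\<exists>k < n. \<exists>ah :: nat \<Rightarrow> complex. \<exists>yh :: nat \<Rightarrow> real. admissible \<Omega> M \<sigma> Y k ah yh)"
proof
  assume "\<exists>k < n. \<exists>ah :: nat \<Rightarrow> complex. \<exists>yh :: nat \<Rightarrow> real. admissible \<Omega> M \<sigma> Y k ah yh"
  then obtain k ah yh where "k < n" and adm: "admissible \<Omega> M \<sigma> Y k ah yh"
    by blast
  define N where "N = n - 1"
  define m where "m = (MIN j\<in>{..<n}. cmod (a j))"
  define D where "D = 4.4 * pi * exp 1 / \<Omega> * (\<sigma> / m) powr (1 / (2 * real N))"
  have n: "n = Suc N" "N \<ge> 1"
    using assms(1) by (auto simp: N_def)
  have "m \<in> (\<lambda>j. cmod (a j)) ` {..<n}"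
    unfolding m_def using n by (intro Min_in) auto
  then have m: "m > 0" "\<forall>j<n. m \<le> cmod (a j)"
    using assms(4) by (auto simp: m_def)
  have "cmod (W 1) \<le> sup_normM M W"
    using assms(2) by (intro norm_le_sup_normM) auto
  then have "\<sigma> > 0"
    using norm_ge_zero[of "W 1"] assms(8) by linarith
  then have "D > 0"
    using m assms(3) by (simp add: D_def)
  have sep: "\<forall>p<Suc N. \<forall>j<Suc N. p \<noteq> j \<longrightarrow> D \<le> \<bar>y p - y j\<bar>"
    using assms(9) by (simp add: n D_def m_def)
  have range: "\<forall>j<Suc N. \<bar>y j\<bar> \<le> N * pi / (2*\<Omega>)"
    using assms(6) by (force simp: n abs_le_iff)
  have "m * (\<Omega>*D/(2 * real N * pi))^(2*N) * (fact N)^2 < 2^(2*N) * (2*\<sigma>)"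
    using admissible_sample_diff_less[OF assms(7,8) adm] assms(2) m(2) \<open>k < n\<close>
    by (intro separation_bound[OF n(2) _ assms(3) \<open>D > 0\<close> m(1) _ sep range]) (auto simp: n)
  moreover have "2^(2*N) * (2*\<sigma>) \<le> m * (\<Omega>*D/(2 * real N * pi))^(2*N) * (fact N)^2"
    unfolding D_def using n(2) assms(3) \<open>\<sigma> > 0\<close> m(1) by (rule separation_threshold_bound)
  ultimately show False
    by linarith
qed

end
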